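(* For $\Lambda_1,\Lambda_2\in\mathcal{M}_2$ the following are equivalent: (1) $\Lambda_1(\mathbf{w})\le\Lambda_2(\mathbf{w})$ for all $\mathbf{w}\in\mathbb{R}_+^2$; (2) $(\Lambda_1*\Lambda)(\mathbf{w})\le(\Lambda_2*\Lambda)(\mathbf{w})$ for all $\mathbf{w}\in\mathbb{R}_+^2$ and all $\Lambda\in\mathcal{M}_2$.
   Context: $\mathcal{M}_2$ is the set of bivariate tail dependence functions $\Lambda(\mathbf{w})=\lim_{s\searrow0}C(s\mathbf{w})/s$, $\mathbf{w}\in\mathbb{R}_+^2$ ($\mathbb{R}_+=[0,\infty)$), of $2$-copulas $C$. The Markov product is $(\Lambda_1*\Lambda_2)(w_1,w_2):=\int_0^\infty\partial_2\Lambda_1(w_1,t)\,\partial_1\Lambda_2(t,w_2)\,dt$. *)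

theory Defs
  imports "HOL-Analysis.Analysis"
begin

text \<open>A bivariate copula, as a function on [0,1]^2 (values outside are irrelevant).\<close>
definition copula2 :: "(real \<Rightarrow> real \<Rightarrow> real) \<Rightarrow> bool" where
  "copula2 C \<longleftrightarrow>
     (\<forall>u\<in>{0..1}. C u 0 = 0 \<and> C 0 u = 0 \<and> C u 1 = u \<and> C 1 u = u) \<and>
     (\<forall>u1 u2 v1 v2. 0 \<le> u1 \<and> u1 \<le> u2 \<and> u2 \<le> 1 \<and> 0 \<le> v1 \<and> v1 \<le> v2 \<and> v2 \<le> 1 \<longrightarrow>
        C u2 v2 - C u2 v1 - C u1 v2 + C u1 v1 \<ge> 0)"

definition is_tdf :: "(real \<Rightarrow> real \<Rightarrow> real) \<Rightarrow> (real \<Rightarrow> real \<Rightarrow> real) \<Rightarrow> bool" where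
  "is_tdf C L \<longleftrightarrow>
     (\<forall>w1 \<ge> 0. \<forall>w2 \<ge> 0. ((\<lambda>s. C (s * w1) (s * w2) / s) \<longlongrightarrow> L w1 w2) (at_right 0))"

definition M2 :: "(real \<Rightarrow> real \<Rightarrow> real) set" where
  "M2 = {L. \<exists>C. copula2 C \<and> is_tdf C L}"

definition markov_prod :: "(real \<Rightarrow> real \<Rightarrow> real) \<Rightarrow> (real \<Rightarrow> real \<Rightarrow> real) \<Rightarrow> real \<Rightarrow> real \<Rightarrow> real" where
  "markov_prod L1 L2 w1 w2 =
     (LINT t:{0..}|lebesgue. deriv (\<lambda>x. L1 w1 x) t * deriv (\<lambda>x. L2 x w2) t)"

end

theory Submission
  imports Defs
begin

(*
  Each section y \<mapsto> \<Lambda>(x,y) of a tail dependence function is nondecreasing and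
  1-Lipschitz, and it is concave: homogeneity turns a dilation of the second argument
  into a contraction of the first, so by 2-increasingness chord slopes can only shrink
  under dilations, and a continuous function with this property is concave.  Hence
  \<Lambda>(x,T) = \<integral>_0^T r, where the right derivative r of the section is nonincreasing,
  takes values in [0,1] and is the derivative off the countable set of its jumps.

  Consequently (\<Lambda>_i * \<Lambda>)(w) = \<integral>_0^\<infinity> r_i q, with r_i the density of \<Lambda>_i(w1,\<cdot>) and
  q = \<partial>_1 \<Lambda>(\<cdot>,w2) nonincreasing with values in [0,1].  Up to 1/n, q is an average
  of indicators of initial segments [0,\<tau>] of [0,\<infinity>), and \<integral>_0^\<tau> r_i = \<Lambda>_i(w1,\<tau>), so
  \<Lambda>_1 \<le> \<Lambda>_2 gives (1) \<Longrightarrow> (2).  Conversely \<partial>_1 min(t,w2) is the indicator of t \<le> w2,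
  so \<Lambda>_i * min = \<Lambda>_i, and (2) for \<Lambda> = min is (1).
*)

section \<open>Tail dependence functions\<close>

lemma eventually_at_right_0_mult_le_1:
  fixes M :: real
  assumes "0 \<le> M"
  shows "eventually (\<lambda>s. 0 < s \<and> s * M \<le> 1) (at_right 0)"
proof -
  have "\<exists>b>0. \<forall>s>0. s < b \<longrightarrow> 0 < s \<and> s * M \<le> 1"
  proof (intro exI[of _ "1 / (M + 1)"] conjI allI impI)
    fix s :: real assume "0 < s" "s < 1 / (M + 1)"
    then have "s * (M + 1) < 1" using assms by (simp add: field_simps)
    then show "s * M \<le> 1" using \<open>0 < s\<close> by (simp add: algebra_simps)
  qed (use assms in auto)
  then show ?thesis by (simp add: eventually_at_right_field)
qed

lemma copula2_increment_right:
  assumes "copula2 C" "0 \<le> u" "u \<le> 1" "0 \<le> v" "v \<le> v'" "v' \<le> 1"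
  shows "0 \<le> C u v' - C u v \<and> C u v' - C u v \<le> v' - v"
proof -
  have "C u v' - C u v - C 0 v' + C 0 v \<ge> 0" "C 1 v' - C 1 v - C u v' + C u v \<ge> 0"
    using assms unfolding copula2_def by (meson order_refl zero_le_one)+
  moreover have "C 0 v' = 0" "C 0 v = 0" "C 1 v' = v'" "C 1 v = v"
    using assms unfolding copula2_def by auto
  ultimately show ?thesis by linarith
qed

lemma copula2_transpose: "copula2 C \<Longrightarrow> copula2 (\<lambda>u v. C v u)"
  unfolding copula2_def by (auto simp: algebra_simps)

lemma is_tdfD:
  "is_tdf C L \<Longrightarrow> 0 \<le> x \<Longrightarrow> 0 \<le> y \<Longrightarrow> ((\<lambda>s. C (s * x) (s * y) / s) \<longlongrightarrow> L x y) (at_right 0)"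
  unfolding is_tdf_def by blast

lemma M2_transpose:
  assumes "L \<in> M2" shows "(\<lambda>x y. L y x) \<in> M2"
proof -
  obtain C where "copula2 C" "is_tdf C L" using assms unfolding M2_def by blast
  then have "copula2 (\<lambda>u v. C v u)" "is_tdf (\<lambda>u v. C v u) (\<lambda>x y. L y x)"
    by (auto simp: copula2_transpose is_tdf_def)
  then show ?thesis unfolding M2_def by blast
qed

lemma M2_min: "(\<lambda>x y. min x y) \<in> M2"
proof -
  have "copula2 (\<lambda>u v. min u v)" unfolding copula2_def by (auto simp: min_def)
  moreover have "is_tdf (\<lambda>u v. min u v) (\<lambda>x y. min x y)"
    unfolding is_tdf_def
  proof (intro allI impI)
    fix w1 w2 :: real
    have "eventually (\<lambda>s. min w1 w2 = min (s * w1) (s * w2) / s) (at_right (0::real))"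
      using eventually_at_right_less[of 0] by eventually_elim (auto simp: min_def)
    then show "((\<lambda>s. min (s * w1) (s * w2) / s) \<longlongrightarrow> min w1 w2) (at_right 0)"
      by (rule Lim_transform_eventually[OF tendsto_const])
  qed
  ultimately show ?thesis unfolding M2_def by blast
qed

lemma M2_increment_right:
  assumes "L \<in> M2" "0 \<le> x" "0 \<le> y" "y \<le> y'"
  shows "0 \<le> L x y' - L x y \<and> L x y' - L x y \<le> y' - y"
proof -
  obtain C where C: "copula2 C" "is_tdf C L" using assms unfolding M2_def by blast
  let ?D = "\<lambda>s. C (s * x) (s * y') / s - C (s * x) (s * y) / s"
  have lim: "(?D \<longlongrightarrow> L x y' - L x y) (at_right 0)"
    using is_tdfD[OF C(2)] assms by (intro tendsto_diff) auto
  have "0 \<le> x + y'" using assms by simp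
  from eventually_at_right_0_mult_le_1[OF this]
  have "eventually (\<lambda>s. 0 \<le> ?D s \<and> ?D s \<le> y' - y) (at_right 0)"
  proof eventually_elim
    case (elim s)
    have "0 \<le> s * x" "0 \<le> s * y" "s * y \<le> s * y'" "s * x + s * y' \<le> 1"
      using elim assms by (auto simp: distrib_left intro: mult_left_mono)
    then have "s * x \<le> 1" "s * y' \<le> 1" "s * y \<le> s * y'"
      by linarith+
    then have "0 \<le> C (s * x) (s * y') - C (s * x) (s * y) \<and>
        C (s * x) (s * y') - C (s * x) (s * y) \<le> s * y' - s * y"
      using copula2_increment_right[OF C(1)] elim assms by simp
    with elim show ?case by (simp add: diff_divide_distrib[symmetric] divide_simps algebra_simps)
  qed
  then have lower: "eventually (\<lambda>s. 0 \<le> ?D s) (at_right 0)"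
    and upper: "eventually (\<lambda>s. ?D s \<le> y' - y) (at_right 0)"
    by (auto elim: eventually_mono)
  show ?thesis
    using tendsto_lowerbound[OF lim lower] tendsto_upperbound[OF lim upper] by simp
qed

lemma M2_zero_right:
  assumes "L \<in> M2" "0 \<le> x"
  shows "L x 0 = 0"
proof -
  obtain C where C: "copula2 C" "is_tdf C L" using assms unfolding M2_def by blast
  have "eventually (\<lambda>s. 0 = C (s * x) (s * 0) / s) (at_right 0)"
    using eventually_at_right_0_mult_le_1[OF assms(2)]
    by eventually_elim (use C(1) assms(2) in \<open>auto simp: copula2_def\<close>)
  then have "((\<lambda>s. C (s * x) (s * 0) / s) \<longlongrightarrow> 0) (at_right 0)"
    by (rule Lim_transform_eventually[OF tendsto_const])
  with is_tdfD[OF C(2) assms(2), of 0] show ?thesis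
    using tendsto_unique[of "at_right (0::real)"] by fastforce
qed

lemma M2_le_left:
  assumes "L \<in> M2" "0 \<le> x" "0 \<le> y"
  shows "L x y \<le> x"
  using M2_increment_right[OF M2_transpose[OF assms(1)] assms(3), of 0 x]
    M2_zero_right[OF M2_transpose[OF assms(1)] assms(3)] assms(2)
  by simp

lemma M2_2_increasing:
  assumes "L \<in> M2" "0 \<le> x" "x \<le> x'" "0 \<le> y" "y \<le> y'"
  shows "0 \<le> L x' y' - L x' y - L x y' + L x y"
proof -
  obtain C where C: "copula2 C" "is_tdf C L" using assms unfolding M2_def by blast
  let ?D = "\<lambda>s. C (s * x') (s * y') / s - C (s * x') (s * y) / s - C (s * x) (s * y') / s + C (s * x) (s * y) / s"
  have lim: "(?D \<longlongrightarrow> L x' y' - L x' y - L x y' + L x y) (at_right 0)"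
    using is_tdfD[OF C(2)] assms by (intro tendsto_diff tendsto_add) auto
  have "0 \<le> x' + y'" using assms by simp
  from eventually_at_right_0_mult_le_1[OF this]
  have "eventually (\<lambda>s. 0 \<le> ?D s) (at_right 0)"
  proof eventually_elim
    case (elim s)
    have "0 \<le> s * x" "0 \<le> s * y" "s * x \<le> s * x'" "s * y \<le> s * y'" "s * x' + s * y' \<le> 1"
      using elim assms by (auto simp: distrib_left intro: mult_left_mono)
    then have "s * x' \<le> 1" "s * y' \<le> 1" "s * x \<le> s * x'" "s * y \<le> s * y'"
      by linarith+
    then have "0 \<le> C (s * x') (s * y') - C (s * x') (s * y) - C (s * x) (s * y') + C (s * x) (s * y)"
      using C(1) elim assms unfolding copula2_def by simp
    with elim show ?case by (simp add: diff_divide_distrib[symmetric] add_divide_distrib[symmetric])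
  qed
  then show ?thesis using tendsto_lowerbound[OF lim] by simp
qed

lemma M2_homogeneous:
  assumes "L \<in> M2" "0 < c" "0 \<le> x" "0 \<le> y"
  shows "L (c * x) (c * y) = c * L x y"
proof -
  obtain C where C: "copula2 C" "is_tdf C L" using assms unfolding M2_def by blast
  have "filterlim (\<lambda>s. s * c) (at_right 0) (at_right (0::real))"
  proof -
    have "((\<lambda>s. s * c) \<longlongrightarrow> 0 * c) (at_right (0::real))"
      by (intro tendsto_intros)
    moreover have "eventually (\<lambda>s. s * c \<in> {0<..} \<and> s * c \<noteq> 0) (at_right (0::real))"
      using eventually_at_right_less[of "0::real"] by eventually_elim (use assms in auto)
    ultimately show ?thesis by (simp add: filterlim_at)
  qed
  from filterlim_compose[OF is_tdfD[OF C(2) assms(3,4)] this]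
  have "((\<lambda>s. c * (C ((s * c) * x) ((s * c) * y) / (s * c))) \<longlongrightarrow> c * L x y) (at_right 0)"
    by (intro tendsto_mult_left) (simp add: o_def)
  moreover have "eventually (\<lambda>s. c * (C ((s * c) * x) ((s * c) * y) / (s * c)) = C (s * (c * x)) (s * (c * y)) / s) (at_right 0)"
    using eventually_at_right_less[of "0::real"] by eventually_elim (use assms in \<open>auto simp: ac_simps\<close>)
  ultimately have "((\<lambda>s. C (s * (c * x)) (s * (c * y)) / s) \<longlongrightarrow> c * L x y) (at_right 0)"
    by (rule Lim_transform_eventually)
  then show ?thesis
    using is_tdfD[OF C(2), of "c * x" "c * y"] assms tendsto_unique[of "at_right (0::real)"] by auto
qed

lemma M2_section_dilation:
  assumes "L \<in> M2" "0 \<le> x" "0 \<le> p" "p \<le> q" "1 \<le> l"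
  shows "L x (l * q) - L x (l * p) \<le> l * (L x q - L x p)"
proof -
  have "0 < l" using assms by simp
  have "x \<le> l * x" using mult_right_mono[of 1 l x] assms by simp
  then have x_l: "0 \<le> x / l" "x / l \<le> x" "l * (x / l) = x"
    using assms \<open>0 < l\<close> by (auto simp: field_simps)
  have "L x (l * q) - L x (l * p) = l * (L (x / l) q - L (x / l) p)"
    using M2_homogeneous[OF assms(1) \<open>0 < l\<close> x_l(1)] assms x_l(3) by (simp add: right_diff_distrib)
  also have "\<dots> \<le> l * (L x q - L x p)"
    using M2_2_increasing[OF assms(1) x_l(1,2) assms(3,4)] \<open>0 < l\<close> by simp
  finally show ?thesis .
qed

lemma M2_section_lipschitz:
  assumes "L \<in> M2" "0 \<le> x"
  shows "1-lipschitz_on {0..} (L x)"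
proof (rule lipschitz_onI)
  fix y z :: real assume "y \<in> {0..}" "z \<in> {0..}"
  then show "dist (L x y) (L x z) \<le> 1 * dist y z"
    using M2_increment_right[OF assms, of y z] M2_increment_right[OF assms, of z y]
    by (cases "y \<le> z") (auto simp: dist_real_def)
qed simp

section \<open>Concave functions and their right derivatives\<close>

lemma geometric_mean_concave_nonneg:
  fixes h :: "real \<Rightarrow> real"
  assumes cont: "continuous_on {a..b} h" and "0 \<le> a" "h a = 0" "h b = 0"
    and geo: "\<And>p m q. a \<le> p \<Longrightarrow> 0 < p \<Longrightarrow> p < m \<Longrightarrow> m * m = p * q \<Longrightarrow> q \<le> b \<Longrightarrow>
      (h q - h m) * (m - p) \<le> (h m - h p) * (q - m)"
    and t: "t \<in> {a..b}"
  shows "0 \<le> h t"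
proof (rule ccontr)
  assume "\<not> 0 \<le> h t"
  obtain t1 where t1: "t1 \<in> {a..b}" "\<And>s. s \<in> {a..b} \<Longrightarrow> h t1 \<le> h s"
    using continuous_attains_inf[OF compact_Icc _ cont] t by fastforce
  define m where "m = h t1"
  have "m < 0" using t1(2)[OF t] \<open>\<not> 0 \<le> h t\<close> by (simp add: m_def)
  define Z where "Z = {s \<in> {a..b}. h s = m}"
  have "closed Z" unfolding Z_def
    by (rule continuous_closed_preimage_constant[OF cont closed_atLeastAtMost])
  moreover have "Z \<noteq> {}" and bdd: "bdd_below Z"
    using t1 unfolding Z_def m_def by (auto intro: bdd_belowI[of _ a])
  \<comment> \<open>the leftmost minimiser t0, so that h is strictly above its minimum left of t0\<close>
  ultimately have "Inf Z \<in> Z" by (intro closed_contains_Inf)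
  define t0 where "t0 = Inf Z"
  have ht0: "h t0 = m" and t0: "a < t0" "t0 < b"
    using \<open>Inf Z \<in> Z\<close> \<open>m < 0\<close> assms(3,4) unfolding Z_def t0_def by (auto simp: order.order_iff_strict)
  have "eventually (\<lambda>\<rho>. 1 < \<rho> \<and> a < t0 / \<rho> \<and> t0 * \<rho> < b) (at_right 1)"
  proof (intro eventually_conj)
    have "((\<lambda>\<rho>. t0 / \<rho>) \<longlongrightarrow> t0 / 1) (at_right 1)" "((\<lambda>\<rho>. t0 * \<rho>) \<longlongrightarrow> t0 * 1) (at_right 1)"
      by (intro tendsto_intros; simp)+
    then show "eventually (\<lambda>\<rho>. a < t0 / \<rho>) (at_right 1)" "eventually (\<lambda>\<rho>. t0 * \<rho> < b) (at_right 1)"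
      using t0 by (auto elim: order_tendstoD)
  qed (rule eventually_at_right_less)
  then obtain \<rho> where \<rho>: "1 < \<rho>" "a < t0 / \<rho>" "t0 * \<rho> < b"
    using eventually_happens'[OF trivial_limit_at_right_real] by blast
  define p q where "p = t0 / \<rho>" and "q = t0 * \<rho>"
  have pq: "0 < p" "p < t0" "t0 < q" "t0 * t0 = p * q" "a \<le> p" "q \<le> b"
    using \<rho> t0 \<open>0 \<le> a\<close> by (auto simp: p_def q_def field_simps)
  have "p \<notin> Z" using cInf_lower[OF _ bdd, of p] pq unfolding t0_def by auto
  then have "m < h p" using t1(2)[of p] pq t0 unfolding Z_def m_def by force
  then have "(m - h p) * (q - t0) < 0" using pq by (simp add: mult_neg_pos)
  moreover have "0 \<le> (h q - m) * (t0 - p)" using t1(2)[of q] pq t0 unfolding m_def by simp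
  moreover have "(h q - m) * (t0 - p) \<le> (m - h p) * (q - t0)"
    using geo[of p t0 q] pq ht0 by simp
  ultimately show False by linarith
qed

lemma concave_on_if_dilation_slopes:
  fixes f :: "real \<Rightarrow> real"
  assumes cont: "continuous_on {0..} f"
    and dil: "\<And>p q l. 0 \<le> p \<Longrightarrow> p \<le> q \<Longrightarrow> 1 \<le> l \<Longrightarrow> f (l * q) - f (l * p) \<le> l * (f q - f p)"
  shows "concave_on {0..} f"
proof (rule concave_on_linorderI)
  fix t x y :: real
  assume t: "0 < t" "t < 1" and xy: "x \<in> {0..}" "y \<in> {0..}" "x < y"
  define k where "k = (f y - f x) / (y - x)"
  define h where "h s = f s - f x - k * (s - x)" for s
  have "t * x \<le> t * y" "(1 - t) * x \<le> (1 - t) * y"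
    using t xy by (auto intro: mult_left_mono)
  then have between: "(1 - t) * x + t * y \<in> {x..y}" by (simp add: algebra_simps)
  have "0 \<le> h ((1 - t) * x + t * y)"
  proof (rule geometric_mean_concave_nonneg[of x y h])
    show "continuous_on {x..y} h"
      unfolding h_def using xy by (intro continuous_intros continuous_on_subset[OF cont]) auto
    show "h y = 0" using xy by (simp add: h_def k_def)
    fix p m q :: real assume pmq: "0 < p" "p < m" "m * m = p * q"
    define l where "l = m / p"
    have "1 \<le> l" "l * m = q" "l * p = m" "l * (m - p) = q - m"
      using pmq by (auto simp: l_def field_simps)
    then have "f q - f m \<le> l * (f m - f p)"
      using dil[of p m l] pmq by simp
    then have "(f q - f m) * (m - p) \<le> l * (f m - f p) * (m - p)"
      using pmq by (intro mult_right_mono) auto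
    also have "\<dots> = (f m - f p) * (q - m)"
      using \<open>l * (m - p) = q - m\<close> by (simp add: ac_simps)
    finally have "(f q - f m) * (m - p) \<le> (f m - f p) * (q - m)" .
    then show "(h q - h m) * (m - p) \<le> (h m - h p) * (q - m)"
      by (simp add: h_def algebra_simps)
  qed (use xy between in \<open>auto simp: h_def\<close>)
  moreover have "k * ((1 - t) * x + t * y - x) = t * (f y - f x)"
    using xy by (simp add: k_def field_simps)
  ultimately show "(1 - t) * f x + t * f y \<le> f ((1 - t) *\<^sub>R x + t *\<^sub>R y)"
    by (simp add: h_def algebra_simps)
qed simp

lemma concave_on_slope_antimono:
  fixes f :: "real \<Rightarrow> real"
  assumes f: "concave_on I f" and "x \<in> I" "v \<in> I" "x < y" "u < v" "x \<le> u" "y \<le> v"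
  shows "(f v - f u) / (v - u) \<le> (f y - f x) / (y - x)"
proof -
  have three_slopes: "(f b - f t) / (b - t) \<le> (f b - f c) / (b - c) \<and> (f b - f c) / (b - c) \<le> (f t - f c) / (t - c)"
    if "c \<in> I" "b \<in> I" "c < t" "t < b" for c t b
  proof -
    have "convex_on I (\<lambda>z. - f z)" using f by (simp add: concave_on_def)
    from convex_on_slope_le[OF this that] that show ?thesis
      by (simp add: divide_simps) argo
  qed
  have "{x..v} \<subseteq> I"
    using atMostAtLeast_subset_convex[OF concave_on_imp_convex[OF f]] assms by simp
  then have "(f v - f u) / (v - u) \<le> (f v - f x) / (v - x)"
    using three_slopes[of x v u] assms by (cases "x = u") auto
  also have "\<dots> \<le> (f y - f x) / (y - x)"
    using three_slopes[of x v y] assms by (cases "y = v") auto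
  finally show ?thesis .
qed

lemma concave_on_bracketing_slope:
  fixes f :: "real \<Rightarrow> real"
  assumes conc: "concave_on {a..} f"
    and incr: "\<And>x y. a \<le> x \<Longrightarrow> x \<le> y \<Longrightarrow> 0 \<le> f y - f x \<and> f y - f x \<le> y - x"
  obtains r where "antimono r" "\<And>t. 0 \<le> r t \<and> r t \<le> 1"
    "\<And>x y. a \<le> x \<Longrightarrow> x \<le> y \<Longrightarrow> (y - x) * r y \<le> f y - f x \<and> f y - f x \<le> (y - x) * r x"
proof -
  define slope where "slope u v = (f v - f u) / (v - u)" for u v
  \<comment> \<open>the right derivative at max a t, i.e. the supremum of the chord slopes to the right of it\<close>
  define r where "r t = Sup {slope u v | u v. max a t \<le> u \<and> u < v}" for t
  have slope_01: "0 \<le> slope u v \<and> slope u v \<le> 1" if "a \<le> u" "u < v" for u v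
    using incr[OF that(1)] that by (auto simp: slope_def divide_simps)
  have r_ge: "slope u v \<le> r t" if "max a t \<le> u" "u < v" for t u v
    unfolding r_def using that slope_01 by (intro cSup_upper bdd_aboveI[of _ 1]) auto
  have r_le: "r t \<le> c" if "\<And>u v. max a t \<le> u \<Longrightarrow> u < v \<Longrightarrow> slope u v \<le> c" for t c
  proof -
    have "slope (max a t) (max a t + 1) \<in> {slope u v | u v. max a t \<le> u \<and> u < v}"
      by force
    then show ?thesis unfolding r_def using that by (intro cSup_least) blast+
  qed
  show ?thesis
  proof
    show "antimono r"
      by (intro antimonoI r_le r_ge) auto
    show "0 \<le> r t \<and> r t \<le> 1" for t
    proof
      show "0 \<le> r t"
        using r_ge[of t "max a t" "max a t + 1"] slope_01[of "max a t" "max a t + 1"] by simp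
      show "r t \<le> 1" by (rule r_le) (use slope_01 in force)
    qed
    show "(y - x) * r y \<le> f y - f x \<and> f y - f x \<le> (y - x) * r x" if "a \<le> x" "x \<le> y" for x y
    proof (cases "x = y")
      case False
      with that have "x < y" by simp
      have "r y \<le> slope x y"
        using concave_on_slope_antimono[OF conc] that \<open>x < y\<close> by (intro r_le) (auto simp: slope_def)
      moreover have "slope x y \<le> r x" using that \<open>x < y\<close> by (intro r_ge) auto
      ultimately show ?thesis using \<open>x < y\<close> by (simp add: slope_def field_simps)
    qed simp
  qed
qed

lemma bracketed_has_real_derivative:
  fixes f r :: "real \<Rightarrow> real"
  assumes bracket: "\<And>x y. a \<le> x \<Longrightarrow> x \<le> y \<Longrightarrow> (y - x) * r y \<le> f y - f x \<and> f y - f x \<le> (y - x) * r x"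
    and "a < t" "isCont r t"
  shows "(f has_real_derivative r t) (at t)"
  unfolding has_field_derivative_iff
proof (rule Lim_transform[OF tendsto_const], rule Lim_null_comparison)
  have "eventually (\<lambda>y. a < y \<and> y \<noteq> t) (at t)"
    using eventually_at_topological[of _ t] \<open>a < t\<close>
    by (auto intro!: exI[of _ "{a<..}"])
  then show "eventually (\<lambda>y. norm ((f y - f t) / (y - t) - r t) \<le> \<bar>r y - r t\<bar>) (at t)"
  proof eventually_elim
    case (elim y)
    show ?case
    proof (cases "t < y")
      case True
      then have "r y \<le> (f y - f t) / (y - t) \<and> (f y - f t) / (y - t) \<le> r t"
        using bracket[of t y] \<open>a < t\<close> by (simp add: field_simps)
      then show ?thesis by (auto simp: abs_if)
    next
      case False
      then have "y < t" using elim by simp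
      moreover have "(f y - f t) / (y - t) = (f t - f y) / (t - y)"
        by (simp add: divide_simps) argo
      ultimately have "r t \<le> (f y - f t) / (y - t) \<and> (f y - f t) / (y - t) \<le> r y"
        using bracket[of y t] elim by (simp add: field_simps)
      then show ?thesis by (auto simp: abs_if)
    qed
  qed
  show "((\<lambda>y. \<bar>r y - r t\<bar>) \<longlongrightarrow> 0) (at t)"
    using \<open>isCont r t\<close> by (simp add: isCont_def LIM_zero_iff tendsto_rabs_zero)
qed

lemma le_if_le_plus_const_over_n:
  fixes A B C :: real
  assumes "\<And>n. 0 < n \<Longrightarrow> A \<le> B + C / real n"
  shows "A \<le> B"
proof (rule LIMSEQ_le_const)
  show "(\<lambda>n. B + C / real n) \<longlonglongrightarrow> B"
    using tendsto_add[OF tendsto_const lim_const_over_n] by simp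
  show "\<exists>N. \<forall>n\<ge>N. A \<le> B + C / real n"
    using assms by (intro exI[of _ 1]) auto
qed

lemma eq_if_increments_bounded:
  fixes g h :: "real \<Rightarrow> real"
  assumes "a \<le> b"
    and incr: "\<And>x y. a \<le> x \<Longrightarrow> x \<le> y \<Longrightarrow> y \<le> b \<Longrightarrow> \<bar>g y - g x\<bar> \<le> (h x - h y) * (y - x)"
  shows "g b = g a"
proof -
  have "\<bar>g b - g a\<bar> \<le> 0 + (h a - h b) * (b - a) / real n" if n: "0 < n" for n :: nat
  proof -
    define x where "x i = a + (b - a) * real i / real n" for i :: nat
    have x_ends: "x 0 = a" "x n = b" using that by (auto simp: x_def)
    have step: "x (Suc i) - x i = (b - a) / real n" for i
      by (simp add: x_def add_divide_distrib distrib_left)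
    have "0 \<le> (b - a) / real n" using \<open>a \<le> b\<close> by simp
    have x_range: "a \<le> x i \<and> x i \<le> b" if "i \<le> n" for i
    proof -
      have "real i / real n \<le> 1" using that n by simp
      then have "(b - a) * (real i / real n) \<le> b - a" using \<open>a \<le> b\<close> by (intro mult_left_le) auto
      then show ?thesis using \<open>a \<le> b\<close> by (simp add: x_def)
    qed
    have "\<bar>g b - g a\<bar> = \<bar>\<Sum>i<n. g (x (Suc i)) - g (x i)\<bar>"
      using sum_lessThan_telescope[of "\<lambda>i. g (x i)" n] by (simp add: x_ends)
    also have "\<dots> \<le> (\<Sum>i<n. \<bar>g (x (Suc i)) - g (x i)\<bar>)"
      by (rule sum_abs)
    also have "\<dots> \<le> (\<Sum>i<n. (h (x i) - h (x (Suc i))) * ((b - a) / real n))"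
    proof (rule sum_mono)
      fix i assume "i \<in> {..<n}"
      then have "a \<le> x i" "x (Suc i) \<le> b" using x_range[of i] x_range[of "Suc i"] by auto
      moreover have "x i \<le> x (Suc i)" using step[of i] \<open>0 \<le> (b - a) / real n\<close> by linarith
      ultimately show "\<bar>g (x (Suc i)) - g (x i)\<bar> \<le> (h (x i) - h (x (Suc i))) * ((b - a) / real n)"
        using incr[of "x i" "x (Suc i)"] by (simp add: step)
    qed
    also have "\<dots> = (\<Sum>i<n. h (x i) - h (x (Suc i))) * ((b - a) / real n)"
      by (rule sum_distrib_right[symmetric])
    also have "\<dots> = (h a - h b) * (b - a) / real n"
      using sum_lessThan_telescope'[of "\<lambda>i. h (x i)" n] by (simp add: x_ends)
    finally show ?thesis by simp
  qed
  then have "\<bar>g b - g a\<bar> \<le> 0" by (rule le_if_le_plus_const_over_n)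
  then show ?thesis by simp
qed

lemma antimono_integrable_on:
  fixes r :: "real \<Rightarrow> real"
  assumes "antimono r"
  shows "r integrable_on {a..b}"
proof -
  have "mono_on {a..b} (\<lambda>t. - r t)"
    using assms by (auto simp: mono_on_def antimono_def)
  then have "(\<lambda>t. - (- r t)) integrable_on {a..b}"
    by (intro integrable_neg integrable_on_mono_on)
  then show ?thesis by simp
qed

lemma bracketed_has_integral:
  fixes f r :: "real \<Rightarrow> real"
  assumes "antimono r" "a \<le> b"
    and bracket: "\<And>x y. a \<le> x \<Longrightarrow> x \<le> y \<Longrightarrow> y \<le> b \<Longrightarrow>
      (y - x) * r y \<le> f y - f x \<and> f y - f x \<le> (y - x) * r x"
  shows "(r has_integral f b - f a) {a..b}"
proof -
  note int = antimono_integrable_on[OF \<open>antimono r\<close>]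
  define F where "F y = integral {a..y} r" for y
  have "\<bar>(f y - F y) - (f x - F x)\<bar> \<le> (r x - r y) * (y - x)" if "a \<le> x" "x \<le> y" "y \<le> b" for x y
  proof -
    have "F y - F x = integral {x..y} r"
      using Henstock_Kurzweil_Integration.integral_combine[of a x y r] int that by (simp add: F_def)
    moreover have "integral {x..y} (\<lambda>_. r y) \<le> integral {x..y} r" "integral {x..y} r \<le> integral {x..y} (\<lambda>_. r x)"
      using \<open>antimono r\<close> int by (intro integral_le; force dest: antimonoD)+
    ultimately have "(y - x) * r y \<le> F y - F x" "F y - F x \<le> (y - x) * r x"
      using that by simp_all
    moreover have "(r x - r y) * (y - x) = (y - x) * r x - (y - x) * r y"
      by (simp add: algebra_simps)
    ultimately show ?thesis using bracket[OF that] unfolding abs_le_iff by linarith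
  qed
  then have "f b - F b = f a - F a" by (rule eq_if_increments_bounded[OF \<open>a \<le> b\<close>])
  then have "integral {a..b} r = f b - f a" by (simp add: F_def)
  then show ?thesis
    using integrable_integral[OF int] by metis
qed

section \<open>Densities of the sections\<close>

lemma M2_section_concave:
  assumes "L \<in> M2" "0 \<le> x"
  shows "concave_on {0..} (L x)"
  using lipschitz_on_continuous_on[OF M2_section_lipschitz[OF assms]] M2_section_dilation[OF assms]
  by (rule concave_on_if_dilation_slopes)

lemma M2_section_density:
  assumes "L \<in> M2" "0 \<le> x"
  obtains r E where "antimono r" "\<And>t. 0 \<le> r t \<and> r t \<le> 1" "countable E"
    "\<And>t. 0 < t \<Longrightarrow> t \<notin> E \<Longrightarrow> deriv (L x) t = r t"
    "\<And>T. 0 \<le> T \<Longrightarrow> (r has_integral L x T) {0..T}"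
proof -
  obtain r where r: "antimono r" "\<And>t. 0 \<le> r t \<and> r t \<le> 1"
    and bracket: "\<And>y z. 0 \<le> y \<Longrightarrow> y \<le> z \<Longrightarrow>
      (z - y) * r z \<le> L x z - L x y \<and> L x z - L x y \<le> (z - y) * r y"
    using concave_on_bracketing_slope[OF M2_section_concave[OF assms] M2_increment_right[OF assms]]
    by blast
  have "countable {t. \<not> isCont (\<lambda>t. - r t) t}"
    using \<open>antimono r\<close> by (intro mono_ctble_discont) (auto simp: mono_def antimono_def)
  then have "countable {t. \<not> isCont r t}"
    by (rule countable_subset[rotated]) (auto dest: isCont_minus[where f = "\<lambda>t. - r t"])
  then show ?thesis
  proof (rule that[OF r])
    show "deriv (L x) t = r t" if "0 < t" "t \<notin> {t. \<not> isCont r t}" for t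
      using bracketed_has_real_derivative[OF bracket] that by (intro DERIV_imp_deriv) auto
    show "(r has_integral L x T) {0..T}" if "0 \<le> T" for T
      using bracketed_has_integral[OF r(1) that, of "L x"] bracket M2_zero_right[OF assms] by simp
  qed
qed

section \<open>Integrals against a nonincreasing weight\<close>

lemma antimono_borel_measurable_lebesgue:
  fixes q :: "real \<Rightarrow> real"
  assumes "antimono q"
  shows "q \<in> borel_measurable lebesgue"
proof -
  have "mono (\<lambda>t. - q t)" using assms by (auto simp: mono_def antimono_def)
  then have "(\<lambda>t. - (- q t)) \<in> borel_measurable borel"
    by (intro borel_measurable_uminus borel_measurable_mono)
  then have "q \<in> borel_measurable lborel" by simp
  then show ?thesis by (rule measurable_completion)
qed

lemma set_integral_if_has_integral_nonneg:
  fixes r :: "real \<Rightarrow> real"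
  assumes "(r has_integral I) S" "\<And>t. t \<in> S \<Longrightarrow> 0 \<le> r t"
  shows "set_integrable lebesgue S r" "(LINT t:S|lebesgue. r t) = I"
proof -
  show int: "set_integrable lebesgue S r"
    using assms by (intro nonnegative_absolutely_integrable_1) auto
  show "(LINT t:S|lebesgue. r t) = I"
    using set_lebesgue_integral_eq_integral(2)[OF int] integral_unique[OF assms(1)] by simp
qed

lemma set_integrable_Ici_if_bounded_integrals:
  fixes r :: "real \<Rightarrow> real"
  assumes nonneg: "\<And>t. a \<le> t \<Longrightarrow> 0 \<le> r t"
    and int: "\<And>T. r integrable_on {a..T}"
    and bound: "\<And>T. a \<le> T \<Longrightarrow> integral {a..T} r \<le> B"
  shows "set_integrable lebesgue {a..} r"
proof -
  define f where "f k t = (if t \<in> {..real k} then r t else 0)" for k :: nat and t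
  have integral_f: "integral {a..} (f k) = integral {a..real k} r" for k
    unfolding f_def integral_restrict_Int by (simp add: Int_commute atLeastAtMost_def)
  have "r integrable_on {a..}"
  proof (rule monotone_convergence_increasing[THEN conjunct1])
    show "f k integrable_on {a..}" for k
      unfolding f_def integrable_restrict_Int using int by (simp add: Int_commute atLeastAtMost_def)
    show "f k t \<le> f (Suc k) t" if "t \<in> {a..}" for k t
      using nonneg that by (auto simp: f_def)
    show "(\<lambda>k. f k t) \<longlonglongrightarrow> r t" for t
    proof (rule tendsto_eventually)
      show "eventually (\<lambda>k. f k t = r t) sequentially"
        using eventually_ge_at_top[of "nat \<lceil>t\<rceil>"]
        by eventually_elim (use real_nat_ceiling_ge[of t] in \<open>auto simp: f_def\<close>)
    qed
    have "norm (integral {a..} (f k)) \<le> B" for k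
    proof (cases "a \<le> real k")
      case True
      then show ?thesis
        using bound[OF True] Henstock_Kurzweil_Integration.integral_nonneg[OF int, of "real k"] nonneg
        by (simp add: integral_f)
    next
      case False
      then show ?thesis using bound[of a] by (simp add: integral_f)
    qed
    then show "bounded (range (\<lambda>k. integral {a..} (f k)))"
      by (auto simp: bounded_iff)
  qed
  then show ?thesis
    using nonneg by (intro nonnegative_absolutely_integrable_1) auto
qed

lemma set_integrable_mult_bounded:
  fixes f g :: "'a \<Rightarrow> real"
  assumes f: "set_integrable M A f" and g: "g \<in> borel_measurable M" "\<And>x. \<bar>g x\<bar> \<le> 1"
  shows "set_integrable M A (\<lambda>x. f x * g x)"
proof (rule set_integrable_bound[OF f])
  have "(\<lambda>x. indicator A x *\<^sub>R f x) \<in> borel_measurable M"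
    using f unfolding set_integrable_def by (rule borel_measurable_integrable)
  then have "(\<lambda>x. (indicator A x *\<^sub>R f x) * g x) \<in> borel_measurable M"
    using g(1) by measurable
  then show "set_borel_measurable M A (\<lambda>x. f x * g x)"
    unfolding set_borel_measurable_def by (simp add: mult.assoc)
  show "AE x in M. x \<in> A \<longrightarrow> norm (f x * g x) \<le> norm (f x)"
    using g(2) by (auto simp: abs_mult intro!: mult_left_le)
qed

lemma set_borel_measurable_if_set_integrable:
  "set_integrable M A f \<Longrightarrow> set_borel_measurable M A f"
  unfolding set_integrable_def set_borel_measurable_def by (rule borel_measurable_integrable)

lemma set_integral_initial_segment_le:
  fixes r1 r2 :: "real \<Rightarrow> real"
  assumes int: "set_integrable lebesgue {0..} r1" "set_integrable lebesgue {0..} r2"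
    and le: "\<And>T. 0 \<le> T \<Longrightarrow> (LINT t:{0..T}|lebesgue. r1 t) \<le> (LINT t:{0..T}|lebesgue. r2 t)"
    and S: "S \<in> sets lebesgue" "S \<subseteq> {0..}" "\<And>s t. t \<in> S \<Longrightarrow> 0 \<le> s \<Longrightarrow> s \<le> t \<Longrightarrow> s \<in> S"
  shows "(LINT t:S|lebesgue. r1 t) \<le> (LINT t:S|lebesgue. r2 t)"
proof (cases "S = {0..}")
  case True
  have "((\<lambda>T. LINT t:{0..T}|lebesgue. r t) \<longlongrightarrow> (LINT t:{0..}|lebesgue. r t)) at_top"
    if "set_integrable lebesgue {0..} r" for r :: "real \<Rightarrow> real"
    using that by (intro tendsto_set_lebesgue_integral_at_top) auto
  moreover have "eventually (\<lambda>T. (LINT t:{0..T}|lebesgue. r1 t) \<le> (LINT t:{0..T}|lebesgue. r2 t)) at_top"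
    using eventually_ge_at_top[of 0] by eventually_elim (rule le)
  ultimately show ?thesis
    using tendsto_le[OF trivial_limit_at_top_linorder] int True by blast
next
  case False
  then obtain t1 where "0 \<le> t1" "t1 \<notin> S" using S(2) by auto
  then have bdd: "bdd_above S" using S(3) by (intro bdd_aboveI[of _ t1]) (meson linear)
  show ?thesis
  proof (cases "S = {}")
    case False
    define \<tau> where "\<tau> = Sup S"
    have "0 \<le> \<tau>" using False S(2) cSup_upper[OF _ bdd] unfolding \<tau>_def by force
    have "AE t in lebesgue. t \<noteq> \<tau>"
      by (rule AE_not_in[of "{\<tau>}", simplified]) (simp add: negligible_iff_null_sets[symmetric])
    then have "AE t in lebesgue. t \<in> S \<longleftrightarrow> t \<in> {0..\<tau>}"
    proof eventually_elim
      case (elim t)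
      have "t \<in> S" if "0 \<le> t" "t < \<tau>"
        using less_cSup_iff[OF \<open>S \<noteq> {}\<close> bdd, of t] S(3) that unfolding \<tau>_def by force
      then show ?case using elim S(2) cSup_upper[OF _ bdd, of t] unfolding \<tau>_def by force
    qed
    then have "(LINT t:S|lebesgue. r t) = (LINT t:{0..\<tau>}|lebesgue. r t)"
      if "set_integrable lebesgue {0..} r" for r :: "real \<Rightarrow> real"
      using that S(1,2) set_integrable_subset[OF that]
      by (intro set_integral_cong_set set_borel_measurable_if_set_integrable) auto
    then show ?thesis using le[OF \<open>0 \<le> \<tau>\<close>] int by simp
  qed (simp add: set_lebesgue_integral_def)
qed

lemma floor_eq_sum_of_bool:
  fixes y :: real
  assumes "0 \<le> y" "y \<le> real n"
  shows "real_of_int \<lfloor>y\<rfloor> = (\<Sum>k = 1..n. of_bool (real k \<le> y))"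
proof -
  have "{1..n} \<inter> {k. real k \<le> y} = {1..nat \<lfloor>y\<rfloor>}"
  proof (intro set_eqI iffI)
    fix k assume "k \<in> {1..nat \<lfloor>y\<rfloor>}"
    moreover from this have "real k \<le> y"
      using of_nat_floor[OF assms(1)] by (auto intro: order_trans[of _ "real (nat \<lfloor>y\<rfloor>)"])
    ultimately show "k \<in> {1..n} \<inter> {k. real k \<le> y}" using assms(2) by auto
  qed (auto intro: le_nat_floor)
  then show ?thesis using assms by simp
qed

lemma nonneg_superlevel_set_sets_lebesgue:
  fixes q :: "real \<Rightarrow> real"
  assumes "q \<in> borel_measurable lebesgue"
  shows "{t. 0 \<le> t \<and> c \<le> q t} \<in> sets lebesgue"
proof -
  have "{0::real..} \<in> sets lebesgue" by (rule sets_completionI_sets) simp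
  moreover have "q -` {c..} \<inter> space lebesgue \<in> sets lebesgue"
    by (rule measurable_sets[OF assms]) simp
  moreover have "{t. 0 \<le> t \<and> c \<le> q t} = {0..} \<inter> (q -` {c..} \<inter> space lebesgue)"
    by auto
  ultimately show ?thesis by (simp only: sets.Int)
qed

lemma set_integral_floor_staircase:
  fixes r q :: "real \<Rightarrow> real" and n :: nat
  assumes "0 < n" and int: "set_integrable lebesgue {0..} r"
    and q: "q \<in> borel_measurable lebesgue" "\<And>t. 0 \<le> q t \<and> q t \<le> 1"
  shows "(LINT t:{0..}|lebesgue. r t * (\<lfloor>real n * q t\<rfloor> / real n)) =
    (\<Sum>k = 1..n. LINT t:{t. 0 \<le> t \<and> real k / real n \<le> q t}|lebesgue. r t) / real n"
proof -
  define S where "S k = {t. 0 \<le> t \<and> real k / real n \<le> q t}" for k :: nat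
  have "S k \<in> sets lebesgue" for k
    unfolding S_def by (rule nonneg_superlevel_set_sets_lebesgue[OF q(1)])
  then have int_S: "integrable lebesgue (\<lambda>t. indicator (S k) t * r t)" for k
    using set_integrable_subset[OF int] unfolding set_integrable_def by (auto simp: S_def)
  have stair: "indicator {0..} t * (r t * (\<lfloor>real n * q t\<rfloor> / real n)) =
      (\<Sum>k = 1..n. indicator (S k) t * r t) / real n" for t
  proof (cases "0 \<le> t")
    case True
    have "real k \<le> real n * q t \<longleftrightarrow> t \<in> S k" for k
      using True \<open>0 < n\<close> by (simp add: S_def pos_divide_le_eq mult.commute)
    moreover have "real n * q t \<le> real n" using q(2)[of t] by (simp add: mult_left_le)
    ultimately have "real_of_int \<lfloor>real n * q t\<rfloor> = (\<Sum>k = 1..n. indicator (S k) t)"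
      using floor_eq_sum_of_bool[of "real n * q t" n] q(2)[of t] by (simp add: indicator_def)
    moreover have "r t * (\<Sum>k = 1..n. indicator (S k) t) = (\<Sum>k = 1..n. indicator (S k) t * r t)"
      by (simp only: sum_distrib_left mult.commute)
    ultimately show ?thesis using True by (simp only: indicator_simps atLeast_iff mult_1 times_divide_eq_right)
  qed (simp add: S_def)
  have "(LINT t:{0..}|lebesgue. r t * (\<lfloor>real n * q t\<rfloor> / real n)) =
      (LINT t|lebesgue. (\<Sum>k = 1..n. indicator (S k) t * r t) / real n)"
    by (simp only: set_lebesgue_integral_def real_scaleR_def stair)
  also have "\<dots> = (\<Sum>k = 1..n. LINT t|lebesgue. indicator (S k) t * r t) / real n"
    by (simp only: integral_divide_zero Bochner_Integration.integral_sum[OF int_S])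
  also have "\<dots> = (\<Sum>k = 1..n. LINT t:S k|lebesgue. r t) / real n"
    by (simp only: set_lebesgue_integral_def real_scaleR_def)
  finally show ?thesis by (simp only: S_def)
qed

lemma set_integral_mult_antimono_le:
  fixes r1 r2 q :: "real \<Rightarrow> real"
  assumes nonneg: "\<And>t. 0 \<le> t \<Longrightarrow> 0 \<le> r1 t" "\<And>t. 0 \<le> t \<Longrightarrow> 0 \<le> r2 t"
    and int: "set_integrable lebesgue {0..} r1" "set_integrable lebesgue {0..} r2"
    and le: "\<And>T. 0 \<le> T \<Longrightarrow> (LINT t:{0..T}|lebesgue. r1 t) \<le> (LINT t:{0..T}|lebesgue. r2 t)"
    and q: "antimono q" "\<And>t. 0 \<le> q t \<and> q t \<le> 1"
  shows "(LINT t:{0..}|lebesgue. r1 t * q t) \<le> (LINT t:{0..}|lebesgue. r2 t * q t)"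
proof (rule le_if_le_plus_const_over_n)
  fix n :: nat assume "0 < n"
  note q_meas = antimono_borel_measurable_lebesgue[OF q(1)]
  \<comment> \<open>q' = (\<Sum>k=1..n. indicator {q \<ge> k/n}) / n, an average of indicators of initial segments\<close>
  define q' where "q' t = \<lfloor>real n * q t\<rfloor> / real n" for t
  have q'_meas: "q' \<in> borel_measurable lebesgue" unfolding q'_def using q_meas by measurable
  have q'_bounds: "q t - 1 / real n \<le> q' t \<and> q' t \<le> q t" for t
  proof -
    have "(real n * q t - 1) / real n \<le> q' t" "q' t \<le> (real n * q t) / real n"
      unfolding q'_def by (intro divide_right_mono; linarith)+
    then show ?thesis using \<open>0 < n\<close> by (simp add: diff_divide_distrib)
  qed
  have "0 \<le> q' t" for t using q(2)[of t] by (simp add: q'_def)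
  then have q'_abs: "\<bar>q' t\<bar> \<le> 1" for t using q'_bounds[of t] q(2)[of t] by simp
  have q_abs: "\<bar>q t\<bar> \<le> 1" for t using q(2)[of t] by simp
  have int_q: "set_integrable lebesgue {0..} (\<lambda>t. r1 t * q t)" "set_integrable lebesgue {0..} (\<lambda>t. r2 t * q t)"
    and int_q': "set_integrable lebesgue {0..} (\<lambda>t. r1 t * q' t)" "set_integrable lebesgue {0..} (\<lambda>t. r2 t * q' t)"
    using int set_integrable_mult_bounded q_meas q_abs q'_meas q'_abs by blast+
  have "r1 t * q t \<le> r1 t * q' t + r1 t / real n" if "0 \<le> t" for t
    using mult_left_mono[OF _ nonneg(1)[OF that], of "q t" "q' t + 1 / real n"] q'_bounds[of t]
    by (simp add: algebra_simps)
  then have "(LINT t:{0..}|lebesgue. r1 t * q t) \<le> (LINT t:{0..}|lebesgue. r1 t * q' t + r1 t / real n)"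
    using int_q(1) int_q'(1) int(1) by (intro set_integral_mono set_integral_add) auto
  also have "\<dots> = (LINT t:{0..}|lebesgue. r1 t * q' t) + (LINT t:{0..}|lebesgue. r1 t) / real n"
    using int_q'(1) int(1) by simp
  also have "(LINT t:{0..}|lebesgue. r1 t * q' t) \<le> (LINT t:{0..}|lebesgue. r2 t * q' t)"
  proof -
    have "(LINT t:{t. 0 \<le> t \<and> c \<le> q t}|lebesgue. r1 t) \<le> (LINT t:{t. 0 \<le> t \<and> c \<le> q t}|lebesgue. r2 t)" for c
    proof (rule set_integral_initial_segment_le[OF int le])
      show "{t. 0 \<le> t \<and> c \<le> q t} \<in> sets lebesgue"
        by (rule nonneg_superlevel_set_sets_lebesgue[OF q_meas])
      show "s \<in> {t. 0 \<le> t \<and> c \<le> q t}" if "t \<in> {t. 0 \<le> t \<and> c \<le> q t}" "0 \<le> s" "s \<le> t" for s t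
        using that antimonoD[OF q(1), of s t] by simp
    qed auto
    then have "(\<Sum>k = 1..n. LINT t:{t. 0 \<le> t \<and> real k / real n \<le> q t}|lebesgue. r1 t) / real n
        \<le> (\<Sum>k = 1..n. LINT t:{t. 0 \<le> t \<and> real k / real n \<le> q t}|lebesgue. r2 t) / real n"
      by (intro divide_right_mono sum_mono) simp_all
    then show ?thesis
      unfolding q'_def set_integral_floor_staircase[OF \<open>0 < n\<close> int(1) q_meas q(2)]
        set_integral_floor_staircase[OF \<open>0 < n\<close> int(2) q_meas q(2)] .
  qed
  also have "(LINT t:{0..}|lebesgue. r2 t * q' t) \<le> (LINT t:{0..}|lebesgue. r2 t * q t)"
    using nonneg(2) q'_bounds int_q'(2) int_q(2) by (intro set_integral_mono mult_left_mono) auto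
  finally show "(LINT t:{0..}|lebesgue. r1 t * q t)
      \<le> (LINT t:{0..}|lebesgue. r2 t * q t) + (LINT t:{0..}|lebesgue. r1 t) / real n"
    by simp
qed

section \<open>The Markov product\<close>

lemma set_integral_deriv_mult_eq:
  fixes f g r q :: "real \<Rightarrow> real"
  assumes "countable E"
    and f: "\<And>t. 0 < t \<Longrightarrow> t \<notin> E \<Longrightarrow> deriv f t = r t"
    and g: "\<And>t. 0 < t \<Longrightarrow> t \<notin> E \<Longrightarrow> deriv g t = q t"
    and meas: "(\<lambda>t. r t * q t) \<in> borel_measurable lebesgue"
  shows "(LINT t:{0..}|lebesgue. deriv f t * deriv g t) = (LINT t:{0..}|lebesgue. r t * q t)"
proof -
  have "insert 0 E \<in> null_sets lebesgue"
    using \<open>countable E\<close> by (intro null_sets_completionI countable_imp_null_set_lborel) simp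
  from AE_not_in[OF this]
  have ae: "AE t in lebesgue. indicator {0..} t * (r t * q t) = indicator {0..} t * (deriv f t * deriv g t)"
    by eventually_elim (auto simp: indicator_def less_le f g)
  have "{0::real..} \<in> sets lebesgue" by (rule sets_completionI_sets) simp
  then have meas': "(\<lambda>t. indicator {0..} t * (r t * q t)) \<in> borel_measurable lebesgue"
    by (rule borel_measurable_times[OF borel_measurable_indicator meas])
  show ?thesis
    unfolding set_lebesgue_integral_def real_scaleR_def
    by (rule integral_cong_AE[OF borel_measurable_AE[OF meas' ae] meas']) (use ae in auto)
qed

lemma markov_prod_as_density_integral:
  fixes K L :: "real \<Rightarrow> real \<Rightarrow> real" and q :: "real \<Rightarrow> real"
  assumes "K \<in> M2" "0 \<le> x"
    and q: "countable E" "\<And>t. 0 < t \<Longrightarrow> t \<notin> E \<Longrightarrow> deriv (\<lambda>s. L s y) t = q t"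
      "q \<in> borel_measurable lebesgue"
  obtains r where "\<And>t. 0 \<le> r t" "set_integrable lebesgue {0..} r"
    "\<And>T. 0 \<le> T \<Longrightarrow> (LINT t:{0..T}|lebesgue. r t) = K x T"
    "markov_prod K L x y = (LINT t:{0..}|lebesgue. r t * q t)"
proof -
  obtain r E' where r: "antimono r" "\<And>t. 0 \<le> r t \<and> r t \<le> 1" "countable E'"
    "\<And>t. 0 < t \<Longrightarrow> t \<notin> E' \<Longrightarrow> deriv (K x) t = r t"
    "\<And>T. 0 \<le> T \<Longrightarrow> (r has_integral K x T) {0..T}"
    by (rule M2_section_density[OF assms(1,2)]) (rule that)
  show ?thesis
  proof (rule that)
    show "0 \<le> r t" for t using r(2) by simp
    show "(LINT t:{0..T}|lebesgue. r t) = K x T" if "0 \<le> T" for T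
      using set_integral_if_has_integral_nonneg(2)[OF r(5)[OF that]] r(2) by simp
    show "set_integrable lebesgue {0..} r"
    proof (rule set_integrable_Ici_if_bounded_integrals)
      show "integral {0..T} r \<le> x" if "0 \<le> T" for T
        using integral_unique[OF r(5)[OF that]] M2_le_left[OF assms(1,2) that] by simp
    qed (use r(2) antimono_integrable_on[OF r(1)] in auto)
    have "(\<lambda>t. r t * q t) \<in> borel_measurable lebesgue"
      using antimono_borel_measurable_lebesgue[OF r(1)] q(3) by measurable
    then show "markov_prod K L x y = (LINT t:{0..}|lebesgue. r t * q t)"
      unfolding markov_prod_def using r(3,4) q(1,2)
      by (intro set_integral_deriv_mult_eq[of "E' \<union> E"]) auto
  qed
qed

lemma markov_prod_mono_left:
  assumes "L1 \<in> M2" "L2 \<in> M2" "L \<in> M2" "0 \<le> w1" "0 \<le> w2"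
    and le: "\<And>T. 0 \<le> T \<Longrightarrow> L1 w1 T \<le> L2 w1 T"
  shows "markov_prod L1 L w1 w2 \<le> markov_prod L2 L w1 w2"
proof -
  obtain q E where q: "antimono q" "\<And>t. 0 \<le> q t \<and> q t \<le> 1" "countable E"
    "\<And>t. 0 < t \<Longrightarrow> t \<notin> E \<Longrightarrow> deriv (\<lambda>x. L x w2) t = q t"
    by (rule M2_section_density[OF M2_transpose[OF assms(3)] assms(5)]) (rule that)
  note q_meas = antimono_borel_measurable_lebesgue[OF q(1)]
  obtain r1 where r1: "\<And>t. 0 \<le> r1 t" "set_integrable lebesgue {0..} r1"
    "\<And>T. 0 \<le> T \<Longrightarrow> (LINT t:{0..T}|lebesgue. r1 t) = L1 w1 T"
    "markov_prod L1 L w1 w2 = (LINT t:{0..}|lebesgue. r1 t * q t)"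
    using markov_prod_as_density_integral[where L = L and y = w2, OF assms(1,4) q(3,4) q_meas] by blast
  obtain r2 where r2: "\<And>t. 0 \<le> r2 t" "set_integrable lebesgue {0..} r2"
    "\<And>T. 0 \<le> T \<Longrightarrow> (LINT t:{0..T}|lebesgue. r2 t) = L2 w1 T"
    "markov_prod L2 L w1 w2 = (LINT t:{0..}|lebesgue. r2 t * q t)"
    using markov_prod_as_density_integral[where L = L and y = w2, OF assms(2,4) q(3,4) q_meas] by blast
  show ?thesis
    unfolding r1(4) r2(4)
    by (rule set_integral_mult_antimono_le[OF _ _ r1(2) r2(2) _ q(1,2)]) (simp_all add: r1 r2 le)
qed

lemma deriv_min_right:
  fixes t w :: real
  assumes "t \<noteq> w"
  shows "deriv (\<lambda>x. min x w) t = indicator {..w} t"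
proof (cases "t < w")
  case True
  have "((\<lambda>x. min x w) has_real_derivative 1) (at t)"
    by (rule has_field_derivative_transform_within_open[OF DERIV_ident, of "{..<w}"]) (use True in auto)
  then show ?thesis using True by (simp add: DERIV_imp_deriv)
next
  case False
  then have "((\<lambda>x. min x w) has_real_derivative 0) (at t)"
    using assms by (intro has_field_derivative_transform_within_open[OF DERIV_const, of "{w<..}"]) auto
  then show ?thesis using False assms by (simp add: DERIV_imp_deriv)
qed

lemma markov_prod_min_right:
  assumes "L1 \<in> M2" "0 \<le> w1" "0 \<le> w2"
  shows "markov_prod L1 (\<lambda>x y. min x y) w1 w2 = L1 w1 w2"
proof -
  have "countable {w2}" "(indicator {..w2} :: real \<Rightarrow> real) \<in> borel_measurable lebesgue"
    by (simp_all add: borel_measurable_indicator_iff)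
  moreover have "deriv (\<lambda>s. min s w2) t = indicator {..w2} t" if "t \<notin> {w2}" for t
    using deriv_min_right that by simp
  ultimately obtain r where r: "\<And>T. 0 \<le> T \<Longrightarrow> (LINT t:{0..T}|lebesgue. r t) = L1 w1 T"
    "markov_prod L1 (\<lambda>x y. min x y) w1 w2 = (LINT t:{0..}|lebesgue. r t * indicator {..w2} t)"
    using markov_prod_as_density_integral[where L = "\<lambda>x y. min x y" and y = w2, OF assms(1,2)]
    by blast
  have "(LINT t:{0..}|lebesgue. r t * indicator {..w2} t) = (LINT t:{0..w2}|lebesgue. r t)"
    unfolding set_lebesgue_integral_def by (rule Bochner_Integration.integral_cong) (auto simp: indicator_def)
  then show ?thesis using r assms(3) by simp
qed

theorem mainTheorem10:
  assumes "L1 \<in> M2" and "L2 \<in> M2"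
  shows "(\<forall>w1 \<ge> 0. \<forall>w2 \<ge> 0. L1 w1 w2 \<le> L2 w1 w2) \<longleftrightarrow>
         (\<forall>L \<in> M2. \<forall>w1 \<ge> 0. \<forall>w2 \<ge> 0. markov_prod L1 L w1 w2 \<le> markov_prod L2 L w1 w2)"
proof (intro iffI ballI allI impI)
  fix L and w1 w2 :: real assume "\<forall>w1 \<ge> 0. \<forall>w2 \<ge> 0. L1 w1 w2 \<le> L2 w1 w2" "L \<in> M2" "0 \<le> w1" "0 \<le> w2"
  then show "markov_prod L1 L w1 w2 \<le> markov_prod L2 L w1 w2"
    by (intro markov_prod_mono_left[OF assms]) auto
next
  fix w1 w2 :: real
  assume "\<forall>L \<in> M2. \<forall>w1 \<ge> 0. \<forall>w2 \<ge> 0. markov_prod L1 L w1 w2 \<le> markov_prod L2 L w1 w2"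
    and w: "0 \<le> w1" "0 \<le> w2"
  then have "markov_prod L1 (\<lambda>x y. min x y) w1 w2 \<le> markov_prod L2 (\<lambda>x y. min x y) w1 w2"
    using M2_min by blast
  then show "L1 w1 w2 \<le> L2 w1 w2"
    by (simp only: markov_prod_min_right[OF assms(1) w] markov_prod_min_right[OF assms(2) w])
qed

end
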